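(* For $k\ge2$ the following hold (with the convention $\Gamma_{k,r}(d,j)=0$ if $r<0$, $r>k$ or $d>k$). For $d\ge1$: $\Gamma_{k,r}(d,1)=\Gamma_{k-1,r-1}(d,2)+\Gamma_{k-1,r}(d-1,1)+\Gamma_{k-1,r}(d,2)$, $\Gamma_{k,r}(d,2)=\Gamma_{k-1,r-1}(d,1)+2\Gamma_{k-1,r}(d+1,2)$, $\Gamma_{k,r}(d,3)=\Gamma_{k-1,r-1}(d,4)+2\Gamma_{k-1,r}(d+1,3)$, $\Gamma_{k,r}(d,4)=\Gamma_{k-1,r-1}(d,3)+\Gamma_{k-1,r}(d-1,4)+\Gamma_{k-1,r}(d,3)$. For $d=0$: $\Gamma_{k,r}(0,1)=\Gamma_{k-1,r-1}(0,2)+2\Gamma_{k-1,r}(1,3)$, $\Gamma_{k,r}(0,2)=\Gamma_{k-1,r-1}(0,1)+2\Gamma_{k-1,r}(1,2)$, $\Gamma_{k,r}(0,3)=\Gamma_{k-1,r-1}(0,4)+2\Gamma_{k-1,r}(1,3)$, $\Gamma_{k,r}(0,4)=\Gamma_{k-1,r-1}(0,3)+2\Gamma_{k-1,r}(1,2)$.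
   Context: $\mathcal B$ is the $2$-regular Bethe lattice (infinite tree, every node of degree $3$), a metric graph with edges of length $1$; $m(B)$ is the midpoint of edge $B$, $\mathrm{dist}$ the path distance. Each edge has two orientations, $-\vec C$ the opposite of $\vec C$; $\vec C\to\vec D$ means the terminal node of $\vec C$ is the initial node of $\vec D$. A path of length $k\ge1$ from $\vec A$ to $\vec B$ is a tuple $(\vec C_0,\dots,\vec C_k)$ with $\vec C_0=\vec A$, $\vec C_k=\vec B$ and $\vec C_i\to\vec C_{i+1}$ for all $i$; an inversion is an index $i$ with $\vec C_{i+1}=-\vec C_i$. Types of $(\vec A,\vec B)$ with $d=\mathrm{dist}(m(A),m(B))\ge1$: $\vec A$ points toward $B$ if its terminal node lies on the geodesic from $m(A)$ to $m(B)$; $\vec B$ points away from $A$ if its initial node lies on that geodesic. Type 1: $\vec A$ toward, $\vec B$ away; type 2: $\vec A$ toward, $\vec B$ toward $A$; type 3: $\vec A$ away from $B$, $\vec B$ toward $A$; type 4: $\vec A$ away, $\vec B$ away. For $d=0$, types 1 and 3 mean $\vec B=\vec A$, types 2 and 4 mean $\vec B=-\vec A$. $\Gamma_{k,r}(d,j)$ is the number of paths of length $k$ with exactly $r$ inversions from $\vec A$ to $\vec B$, where $(\vec A,\vec B)$ is any pair at distance $d$ of type $j$ (this number depends only on $k,r,d,j$). *)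

theory Defs
  imports Complex_Main
begin

text \<open>Model of the 2-regular Bethe lattice (3-regular infinite tree): vertices are
reduced words over the letters 0,1,2 (no two consecutive equal letters), i.e. elements
of the free product of three copies of Z/2Z; a word is adjacent to its one-letter
extensions.\<close>

definition bvert :: "nat list \<Rightarrow> bool" where
  "bvert w \<longleftrightarrow> set w \<subseteq> {0,1,2} \<and> (\<forall>i. Suc i < length w \<longrightarrow> w ! i \<noteq> w ! Suc i)"

definition badj :: "nat list \<Rightarrow> nat list \<Rightarrow> bool" where
  "badj u v \<longleftrightarrow> bvert u \<and> bvert v \<and> (\<exists>x. v = u @ [x] \<or> u = v @ [x])"

definition vdist :: "nat list \<Rightarrow> nat list \<Rightarrow> nat" where
  "vdist u v = (LEAST n. (badj ^^ n) u v)"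

text \<open>Oriented edges: pairs (initial node, terminal node).\<close>
type_synonym oedge = "nat list \<times> nat list"

definition is_oedge :: "oedge \<Rightarrow> bool" where
  "is_oedge A \<longleftrightarrow> badj (fst A) (snd A)"

definition opp :: "oedge \<Rightarrow> oedge" where
  "opp A = (snd A, fst A)"

definition follows :: "oedge \<Rightarrow> oedge \<Rightarrow> bool" where
  "follows C D \<longleftrightarrow> snd C = fst D"

text \<open>Distance in the metric graph (edge length 1) between the midpoints of the
underlying edges.\<close>
definition mdist :: "oedge \<Rightarrow> oedge \<Rightarrow> nat" where
  "mdist A B = (if {fst A, snd A} = {fst B, snd B} then 0
     else 1 + Min {vdist x y | x y. x \<in> {fst A, snd A} \<and> y \<in> {fst B, snd B}})"

text \<open>Distance in the metric graph from the midpoint of the edge of A to a vertex v.\<close>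
definition mvdist :: "oedge \<Rightarrow> nat list \<Rightarrow> real" where
  "mvdist A v = 1/2 + real (min (vdist (fst A) v) (vdist (snd A) v))"

definition on_geod :: "oedge \<Rightarrow> oedge \<Rightarrow> nat list \<Rightarrow> bool" where
  "on_geod A B v \<longleftrightarrow> mvdist A v + mvdist B v = real (mdist A B)"

definition ptype :: "oedge \<Rightarrow> oedge \<Rightarrow> nat \<Rightarrow> bool" where
  "ptype A B j \<longleftrightarrow>
    (if mdist A B = 0 then
       ((j = 1 \<or> j = 3) \<and> B = A) \<or> ((j = 2 \<or> j = 4) \<and> B = opp A)
     else
       (j = 1 \<and> on_geod A B (snd A) \<and> on_geod A B (fst B)) \<or>
       (j = 2 \<and> on_geod A B (snd A) \<and> on_geod A B (snd B)) \<or>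
       (j = 3 \<and> on_geod A B (fst A) \<and> on_geod A B (snd B)) \<or>
       (j = 4 \<and> on_geod A B (fst A) \<and> on_geod A B (fst B)))"

definition is_path :: "nat \<Rightarrow> oedge \<Rightarrow> oedge \<Rightarrow> oedge list \<Rightarrow> bool" where
  "is_path k A B cs \<longleftrightarrow> length cs = Suc k \<and> (\<forall>C \<in> set cs. is_oedge C) \<and>
     cs ! 0 = A \<and> cs ! k = B \<and> (\<forall>i < k. follows (cs ! i) (cs ! Suc i))"

definition inversions :: "nat \<Rightarrow> oedge list \<Rightarrow> nat" where
  "inversions k cs = card {i. i < k \<and> cs ! Suc i = opp (cs ! i)}"

definition npaths :: "nat \<Rightarrow> nat \<Rightarrow> oedge \<Rightarrow> oedge \<Rightarrow> nat" where
  "npaths k r A B = card {cs. is_path k A B cs \<and> inversions k cs = r}"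

definition Gamma :: "nat \<Rightarrow> int \<Rightarrow> nat \<Rightarrow> nat \<Rightarrow> nat" where
  "Gamma k r d j = (if r < 0 \<or> r > int k \<or> d > k then 0 else
     (SOME n. \<exists>A B. is_oedge A \<and> is_oedge B \<and> mdist A B = d \<and> ptype A B j \<and>
                     n = npaths k (nat r) A B))"

end

theory Submission
  imports Defs
begin

text \<open>Vertices are reduced words and two vertices are adjacent iff one extends the other by a
letter, so the tree distance of \<open>u\<close> and \<open>v\<close> is \<open>|u| + |v| - 2 lcp(u, v)\<close>. A pair of edges
\<open>A = (a0, a1)\<close>, \<open>B = (b0, b1)\<close> is described, as far as \<open>mdist\<close> and \<open>ptype\<close> are concerned, by
the four distances between their endpoints, and these can only take six shapes.

A path of length \<open>k + 1\<close> ending in \<open>B\<close> is a path of length \<open>k\<close> ending in one of the three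
edges \<open>(x, b0)\<close> with \<open>x\<close> adjacent to \<open>b0\<close>, followed by \<open>B\<close>; the last step is an inversion
iff \<open>x = b1\<close>. The edge \<open>(b1, b0) = -B\<close> has the same distance to \<open>A\<close> as \<open>B\<close> and the
complementary type, and the distances and types of the other two are determined by those of
\<open>(A, B)\<close>. Hence \<open>npaths\<close> obeys a recursion in \<open>(k, r, d, j)\<close> alone, which unfolds to the
stated identities.\<close>

section \<open>Tree distance on reduced words\<close>

fun lcp :: "nat list \<Rightarrow> nat list \<Rightarrow> nat" where
  "lcp (x # xs) (y # ys) = (if x = y then Suc (lcp xs ys) else 0)"
| "lcp _ _ = 0"

definition tdist :: "nat list \<Rightarrow> nat list \<Rightarrow> nat" where
  "tdist u v = length u + length v - 2 * lcp u v"

lemma lcp_le_length1: "lcp u v \<le> length u"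
  by (induction u v rule: lcp.induct) auto

lemma lcp_le_length2: "lcp u v \<le> length v"
  by (induction u v rule: lcp.induct) auto

lemma lcp_commute: "lcp u v = lcp v u"
  by (induction u v rule: lcp.induct) auto

lemma lcp_self: "lcp u u = length u"
  by (induction u) auto

lemma lcp_append_self: "lcp u (u @ w) = length u"
  by (induction u) auto

lemma lcp_snoc:
  "lcp a (u @ [x]) =
    (if lcp a u = length u \<and> length u < length a \<and> a ! length u = x then Suc (length u)
     else lcp a u)"
proof (induction u arbitrary: a)
  case Nil
  then show ?case by (cases a) auto
next
  case (Cons z u)
  then show ?case by (cases a) auto
qed

lemma lcp_eq_length_imp_prefix: "lcp a u = length u \<Longrightarrow> u = take (length u) a"
proof (induction a u rule: lcp.induct)
  case (1 x xs y ys)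
  then show ?case by (auto split: if_splits)
qed auto

lemma tdist_commute: "tdist u v = tdist v u"
  unfolding tdist_def by (simp add: lcp_commute)

lemma tdist_eq_0_iff: "tdist u v = 0 \<longleftrightarrow> u = v"
proof
  assume "tdist u v = 0"
  then have "lcp u v = length u" "lcp u v = length v"
    using lcp_le_length1[of u v] lcp_le_length2[of u v] unfolding tdist_def by auto
  then show "u = v"
    using lcp_eq_length_imp_prefix[of v u] lcp_commute[of u v] by simp
qed (simp add: tdist_def lcp_self)

lemma tdist_self [simp]: "tdist u u = 0"
  by (simp add: tdist_eq_0_iff)

lemma tdist_snoc:
  "tdist a (u @ [x]) =
    (if lcp a u = length u \<and> length u < length a \<and> a ! length u = x then tdist a u - 1
     else tdist a u + 1)"
  using lcp_le_length1[of a u] lcp_le_length2[of a u] unfolding tdist_def lcp_snoc by auto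

lemma tdist_snoc_step: "tdist a (u @ [x]) = tdist a u + 1 \<or> tdist a u = tdist a (u @ [x]) + 1"
  using lcp_le_length1[of a u] lcp_le_length2[of a u] unfolding tdist_def lcp_snoc by auto

lemma badj_commute: "badj u v = badj v u"
  unfolding badj_def by auto

lemma badj_imp_bvert: "badj u v \<Longrightarrow> bvert u \<and> bvert v"
  unfolding badj_def by auto

lemma tdist_badj: "badj u v \<Longrightarrow> tdist a v = tdist a u + 1 \<or> tdist a u = tdist a v + 1"
  unfolding badj_def using tdist_snoc_step by metis

lemma tdist_badj_eq_1: "badj u v \<Longrightarrow> tdist u v = 1"
  unfolding badj_def using tdist_snoc[of u u] tdist_snoc[of v v] tdist_commute by auto

lemma bvert_Nil [simp]: "bvert []"
  unfolding bvert_def by auto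

lemma bvert_snoc: "bvert (v @ [x]) \<longleftrightarrow> bvert v \<and> x \<in> {0,1,2} \<and> (v \<noteq> [] \<longrightarrow> last v \<noteq> x)"
  unfolding bvert_def
  by (auto simp: nth_append last_conv_nth split: if_splits) (metis Suc_lessI diff_Suc_1')+

lemma bvert_take: "bvert w \<Longrightarrow> bvert (take n w)"
  unfolding bvert_def by (auto dest: in_set_takeD)

lemma closer_nbr_unique:
  assumes "badj v w1" "badj v w2" "tdist a w1 < tdist a v" "tdist a w2 < tdist a v"
  shows "w1 = w2"
proof -
  have child_closer: "lcp a v = length v \<and> length v < length a \<and> a ! length v = x"
    if "tdist a (v @ [x]) < tdist a v" for x
    using that tdist_snoc[of a v x] by (auto split: if_splits)
  have parent_closer: "\<not> (lcp a w = length w \<and> length w < length a \<and> a ! length w = x)"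
    if "tdist a w < tdist a (w @ [x])" for w x
    using that tdist_snoc[of a w x] by (auto split: if_splits)
  have parent_of_prefix: "lcp a w = length w \<and> length w < length a \<and> a ! length w = x"
    if "lcp a (w @ [x]) = length (w @ [x])" for w x
    using that lcp_snoc[of a w x] lcp_le_length2[of a w] by (auto split: if_splits)
  obtain x1 where 1: "w1 = v @ [x1] \<or> v = w1 @ [x1]" using assms(1) unfolding badj_def by auto
  obtain x2 where 2: "w2 = v @ [x2] \<or> v = w2 @ [x2]" using assms(2) unfolding badj_def by auto
  consider "w1 = v @ [x1]" "w2 = v @ [x2]" | "w1 = v @ [x1]" "v = w2 @ [x2]"
    | "v = w1 @ [x1]" "w2 = v @ [x2]" | "v = w1 @ [x1]" "v = w2 @ [x2]"
    using 1 2 by blast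
  then show ?thesis
  proof cases
    case 1
    then show ?thesis using child_closer assms by metis
  next
    case 2
    then show ?thesis
      using child_closer[of x1] parent_of_prefix[of w2 x2] parent_closer[of w2 x2] assms by auto
  next
    case 3
    then show ?thesis
      using child_closer[of x2] parent_of_prefix[of w1 x1] parent_closer[of w1 x1] assms by auto
  qed simp
qed

lemma closer_nbr_exists:
  assumes "bvert a" "bvert v" "a \<noteq> v"
  obtains w where "badj v w" "tdist a w + 1 = tdist a v"
proof (cases "lcp a v = length v")
  case True
  then have v: "v = take (length v) a" using lcp_eq_length_imp_prefix by simp
  with assms(3) have lt: "length v < length a"
    by (cases "length a \<le> length v") auto
  define w where "w = v @ [a ! length v]"
  have "w = take (Suc (length v)) a"
    unfolding w_def using v lt by (metis take_Suc_conv_app_nth)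
  then have "bvert w" using assms(1) bvert_take by simp
  then have "badj v w" unfolding badj_def w_def using assms(2) by auto
  moreover have "tdist a w + 1 = tdist a v" unfolding w_def
    using tdist_snoc[of a v] True lt tdist_eq_0_iff[of a v] assms(3) by auto
  ultimately show thesis by (rule that)
next
  case False
  then have "v \<noteq> []" by auto
  then obtain w y where v: "v = w @ [y]" by (cases v rule: rev_cases) auto
  then have "badj v w" unfolding badj_def using assms(2) bvert_snoc by auto
  moreover have "tdist a w + 1 = tdist a v"
    using False v lcp_snoc[of a w y] tdist_snoc[of a w y] by (auto split: if_splits)
  ultimately show thesis by (rule that)
qed

lemma relpowp_badj_imp_tdist_le: "(badj ^^ n) u v \<Longrightarrow> tdist u v \<le> n"
proof (induction n arbitrary: v)
  case (Suc n)
  then obtain w where "(badj ^^ n) u w" "badj w v" by auto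
  then show ?case using Suc.IH[of w] tdist_badj[of w v u] by fastforce
qed simp

lemma relpowp_badj_tdist: "bvert u \<Longrightarrow> bvert v \<Longrightarrow> (badj ^^ tdist u v) u v"
proof (induction "tdist u v" arbitrary: v)
  case 0
  then show ?case using tdist_eq_0_iff by simp
next
  case (Suc n)
  then have "u \<noteq> v" by auto
  then obtain w where w: "badj v w" "tdist u w + 1 = tdist u v"
    using closer_nbr_exists Suc.prems by blast
  have "n = tdist u w" using w Suc.hyps(2) by simp
  then have "(badj ^^ n) u w" using Suc.hyps(1)[of w] Suc.prems badj_imp_bvert[OF w(1)] by simp
  then show ?case using w Suc.hyps(2) badj_commute by (metis relpowp_Suc_I)
qed

lemma vdist_eq_tdist: "bvert u \<Longrightarrow> bvert v \<Longrightarrow> vdist u v = tdist u v"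
  unfolding vdist_def
  by (rule Least_equality) (auto intro: relpowp_badj_tdist dest: relpowp_badj_imp_tdist_le)

section \<open>Neighbourhoods\<close>

definition nbrs :: "nat list \<Rightarrow> nat list set" where
  "nbrs v = {w. badj v w}"

lemma nbrs_Nil: "nbrs [] = (\<lambda>x. [x]) ` {0,1,2}"
  unfolding nbrs_def badj_def using bvert_snoc[of "[]"] by auto

lemma nbrs_snoc:
  assumes v: "bvert (w @ [y])"
  shows "nbrs (w @ [y]) = insert w ((\<lambda>x. w @ [y, x]) ` ({0,1,2} - {y}))"
proof -
  have child: "bvert (w @ [y, x]) \<longleftrightarrow> x \<in> {0,1,2} - {y}" for x
    using v bvert_snoc[of "w @ [y]" x] by auto
  have "bvert w" using v bvert_snoc by blast
  then show ?thesis
    using v child unfolding nbrs_def badj_def by auto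
qed

lemma card_nbrs: "bvert v \<Longrightarrow> card (nbrs v) = 3"
proof (cases v rule: rev_cases)
  case Nil
  then show ?thesis by (simp add: nbrs_Nil card_image)
next
  case (snoc w y)
  assume "bvert v"
  then have y: "y \<in> {0,1,2}" using snoc bvert_snoc by auto
  have "card ({0,1,2} - {y}) = 2" using y by auto
  moreover have "w \<notin> (\<lambda>x. w @ [y, x]) ` ({0,1,2} - {y})" by auto
  ultimately show ?thesis
    using snoc \<open>bvert v\<close> by (simp add: nbrs_snoc card_image inj_on_def)
qed

lemma finite_nbrs: "finite (nbrs v)"
proof (cases "bvert v")
  case False
  then have "nbrs v = {}" unfolding nbrs_def using badj_imp_bvert by auto
  then show ?thesis by simp
qed (simp add: card_ge_0_finite card_nbrs)

lemma card_3_split: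
  assumes "card S = 3" "b \<in> S" "c \<in> S" "b \<noteq> c"
  obtains v where "S = {b, c, v}" "distinct [b, c, v]"
proof -
  have "card (S - {b, c}) = 1" using assms by (simp add: card_Diff_subset)
  then obtain v where "S - {b, c} = {v}" by (auto simp: card_Suc_eq)
  then have "S = {b, c, v}" "distinct [b, c, v]" using assms(2-4) by auto
  then show thesis by (rule that)
qed

section \<open>Distance and type in terms of vertex distances\<close>

text \<open>For edges \<open>(a0, a1)\<close> and \<open>(b0, b1)\<close> the arguments \<open>p q r s\<close> below stand for the vertex
distances \<open>d(a0, b0)\<close>, \<open>d(a0, b1)\<close>, \<open>d(a1, b0)\<close>, \<open>d(a1, b1)\<close>.\<close>

definition mdist4 :: "nat \<Rightarrow> nat \<Rightarrow> nat \<Rightarrow> nat \<Rightarrow> nat" where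
  "mdist4 p q r s =
    (if (p = 0 \<and> s = 0) \<or> (q = 0 \<and> r = 0) then 0 else 1 + min (min p q) (min r s))"

definition ptype4 :: "nat \<Rightarrow> nat \<Rightarrow> nat \<Rightarrow> nat \<Rightarrow> nat \<Rightarrow> bool" where
  "ptype4 p q r s j =
    (if mdist4 p q r s = 0 then
       ((j = 1 \<or> j = 3) \<and> p = 0 \<and> s = 0) \<or> ((j = 2 \<or> j = 4) \<and> q = 0 \<and> r = 0)
     else
       (j = 1 \<and> 1 + min r s = mdist4 p q r s \<and> 1 + min p r = mdist4 p q r s) \<or>
       (j = 2 \<and> 1 + min r s = mdist4 p q r s \<and> 1 + min q s = mdist4 p q r s) \<or>
       (j = 3 \<and> 1 + min p q = mdist4 p q r s \<and> 1 + min q s = mdist4 p q r s) \<or>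
       (j = 4 \<and> 1 + min p q = mdist4 p q r s \<and> 1 + min p r = mdist4 p q r s))"

definition differ_by_one :: "nat \<Rightarrow> nat \<Rightarrow> bool" where
  "differ_by_one x y \<longleftrightarrow> x = y + 1 \<or> y = x + 1"

definition admissible4 :: "nat \<Rightarrow> nat \<Rightarrow> nat \<Rightarrow> nat \<Rightarrow> bool" where
  "admissible4 p q r s \<longleftrightarrow>
    differ_by_one p r \<and> differ_by_one q s \<and> differ_by_one p q \<and> differ_by_one r s \<and>
    (p = s \<and> q = r \<longrightarrow> (p = 0 \<and> s = 0) \<or> (q = 0 \<and> r = 0))"

lemma mdist_eq_mdist4:
  assumes "badj a0 a1" "badj b0 b1"
  shows "mdist (a0, a1) (b0, b1) = mdist4 (tdist a0 b0) (tdist a0 b1) (tdist a1 b0) (tdist a1 b1)"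
proof -
  have v: "bvert a0" "bvert a1" "bvert b0" "bvert b1" using assms badj_imp_bvert by auto
  have "{vdist x y | x y. x \<in> {a0, a1} \<and> y \<in> {b0, b1}} =
      {vdist a0 b0, vdist a0 b1, vdist a1 b0, vdist a1 b1}"
    by blast
  also have "\<dots> = {tdist a0 b0, tdist a0 b1, tdist a1 b0, tdist a1 b1}"
    using vdist_eq_tdist v by simp
  finally have S: "{vdist x y | x y. x \<in> {a0, a1} \<and> y \<in> {b0, b1}} = \<dots>" .
  have E: "{a0, a1} = {b0, b1} \<longleftrightarrow>
      (tdist a0 b0 = 0 \<and> tdist a1 b1 = 0) \<or> (tdist a0 b1 = 0 \<and> tdist a1 b0 = 0)"
    unfolding tdist_eq_0_iff doubleton_eq_iff by auto
  show ?thesis unfolding mdist_def mdist4_def fst_conv snd_conv S E by (simp add: min.assoc)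
qed

lemma on_geod_iff_tdist:
  assumes "badj a0 a1" "badj b0 b1" "bvert v"
  shows "on_geod (a0, a1) (b0, b1) v \<longleftrightarrow>
    1 + min (tdist a0 v) (tdist a1 v) + min (tdist b0 v) (tdist b1 v) = mdist (a0, a1) (b0, b1)"
proof -
  have v: "bvert a0" "bvert a1" "bvert b0" "bvert b1" using assms badj_imp_bvert by auto
  show ?thesis unfolding on_geod_def mvdist_def fst_conv snd_conv
    using vdist_eq_tdist[OF v(1) assms(3)] vdist_eq_tdist[OF v(2) assms(3)]
      vdist_eq_tdist[OF v(3) assms(3)] vdist_eq_tdist[OF v(4) assms(3)]
    by (simp add: of_nat_add[symmetric] del: of_nat_add) (metis of_nat_Suc of_nat_eq_iff)
qed

lemma ptype_eq_ptype4:
  assumes "badj a0 a1" "badj b0 b1"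
  shows "ptype (a0, a1) (b0, b1) j \<longleftrightarrow>
    ptype4 (tdist a0 b0) (tdist a0 b1) (tdist a1 b0) (tdist a1 b1) j"
proof -
  have v: "bvert a0" "bvert a1" "bvert b0" "bvert b1" using assms badj_imp_bvert by auto
  have d1: "tdist a0 a1 = 1" "tdist b0 b1 = 1" using assms tdist_badj_eq_1 by auto
  note geod = on_geod_iff_tdist[OF assms]
  have "on_geod (a0, a1) (b0, b1) a0 \<longleftrightarrow>
      1 + min (tdist a0 b0) (tdist a0 b1) = mdist (a0, a1) (b0, b1)"
    "on_geod (a0, a1) (b0, b1) a1 \<longleftrightarrow>
      1 + min (tdist a1 b0) (tdist a1 b1) = mdist (a0, a1) (b0, b1)"
    "on_geod (a0, a1) (b0, b1) b0 \<longleftrightarrow>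
      1 + min (tdist a0 b0) (tdist a1 b0) = mdist (a0, a1) (b0, b1)"
    "on_geod (a0, a1) (b0, b1) b1 \<longleftrightarrow>
      1 + min (tdist a0 b1) (tdist a1 b1) = mdist (a0, a1) (b0, b1)"
    using geod[OF v(1)] geod[OF v(2)] geod[OF v(3)] geod[OF v(4)] d1 tdist_commute[of a1 a0]
      tdist_commute[of a0 b0] tdist_commute[of a0 b1] tdist_commute[of a1 b0]
      tdist_commute[of a1 b1] tdist_commute[of b1 b0]
    by simp_all
  moreover have "(b0, b1) = (a0, a1) \<longleftrightarrow> tdist a0 b0 = 0 \<and> tdist a1 b1 = 0"
    "(b0, b1) = opp (a0, a1) \<longleftrightarrow> tdist a0 b1 = 0 \<and> tdist a1 b0 = 0"
    unfolding opp_def using tdist_eq_0_iff by auto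
  ultimately show ?thesis
    unfolding ptype_def ptype4_def mdist_eq_mdist4[OF assms, symmetric] fst_conv snd_conv
    by (simp add: min.commute)
qed

text \<open>This gives the exceptional clause of \<open>admissible4\<close>: equal straight and crossing
distances force the two edges to coincide or to be opposite.\<close>

lemma equal_cross_tdist_imp_eq:
  assumes A: "badj a0 a1" and B: "badj b0 b1"
    and eq: "tdist a1 b1 = tdist a0 b0" "tdist a1 b0 = tdist a0 b1"
    and far: "tdist a0 b1 = tdist a0 b0 + 1"
  shows "a0 = b0"
proof (rule ccontr)
  assume "a0 \<noteq> b0"
  moreover have "bvert a0" "bvert b0" using A B badj_imp_bvert by auto
  ultimately obtain t where t: "badj b0 t" "tdist a0 t + 1 = tdist a0 b0"
    using closer_nbr_exists by blast
  have "tdist a1 t = tdist a0 b0"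
    using tdist_badj[OF A, of t] tdist_badj[OF t(1), of a1] t eq far tdist_commute[of t]
    by auto
  then have "t = b1"
    using closer_nbr_unique[OF t(1) B, of a1] eq far by simp
  then show False using t far by simp
qed

lemma admissible4_tdist:
  assumes A: "badj a0 a1" and B: "badj b0 b1"
  shows "admissible4 (tdist a0 b0) (tdist a0 b1) (tdist a1 b0) (tdist a1 b1)"
proof -
  have A': "badj a1 a0" using A badj_commute by auto
  have step_A: "differ_by_one (tdist a0 x) (tdist a1 x)" for x
    using tdist_badj[OF A, of x] tdist_commute unfolding differ_by_one_def by metis
  have step_B: "differ_by_one (tdist x b0) (tdist x b1)" for x
    using tdist_badj[OF B, of x] unfolding differ_by_one_def by metis
  have "tdist a0 b0 = 0 \<and> tdist a1 b1 = 0 \<or> tdist a0 b1 = 0 \<and> tdist a1 b0 = 0"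
    if "tdist a0 b0 = tdist a1 b1" "tdist a0 b1 = tdist a1 b0"
    using step_B[of a0] that equal_cross_tdist_imp_eq[OF A B] equal_cross_tdist_imp_eq[OF A' B]
    unfolding differ_by_one_def by (metis tdist_self)
  then show ?thesis unfolding admissible4_def using step_A step_B by simp
qed

lemma admissible4_cases:
  assumes "admissible4 p q r s"
  obtains (T1) m where "p = m + 1" "q = m + 2" "r = m" "s = m + 1"
  | (T2) m where "p = m + 2" "q = m + 1" "r = m + 1" "s = m"
  | (T3) m where "p = m + 1" "q = m" "r = m + 2" "s = m + 1"
  | (T4) m where "p = m" "q = m + 1" "r = m + 1" "s = m + 2"
  | (E1) "p = 0" "q = 1" "r = 1" "s = 0"
  | (E2) "p = 1" "q = 0" "r = 0" "s = 1"
proof -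
  have a: "p = r + 1 \<or> r = p + 1" "q = s + 1 \<or> s = q + 1"
    "p = q + 1 \<or> q = p + 1" "r = s + 1 \<or> s = r + 1"
    and e: "p = s \<and> q = r \<longrightarrow> (p = 0 \<and> s = 0) \<or> (q = 0 \<and> r = 0)"
    using assms unfolding admissible4_def differ_by_one_def by auto
  consider "r = p + 1" "q = p + 1" | "r = p + 1" "q \<noteq> p + 1"
    | "r \<noteq> p + 1" "q = p + 1" | "r \<noteq> p + 1" "q \<noteq> p + 1"
    by blast
  then show thesis
  proof cases
    case 1
    then show thesis using a e T4[of p] E1 by (cases "s = q + 1") auto
  next
    case 2
    then show thesis using a e T3[of q] by auto
  next
    case 3
    then show thesis using a e T1[of r] by auto
  next
    case 4
    then show thesis using a e T2[of s] E2 by (cases "s = q + 1") auto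
  qed
qed

lemma mdist4_ptype4_T1:
  "mdist4 (m+1) (m+2) m (m+1) = m+1" "ptype4 (m+1) (m+2) m (m+1) j \<longleftrightarrow> j = 1"
  unfolding ptype4_def mdist4_def by (auto simp: min_def)

lemma mdist4_ptype4_T2:
  "mdist4 (m+2) (m+1) (m+1) m = m+1" "ptype4 (m+2) (m+1) (m+1) m j \<longleftrightarrow> j = 2"
  unfolding ptype4_def mdist4_def by (auto simp: min_def)

lemma mdist4_ptype4_T3:
  "mdist4 (m+1) m (m+2) (m+1) = m+1" "ptype4 (m+1) m (m+2) (m+1) j \<longleftrightarrow> j = 3"
  unfolding ptype4_def mdist4_def by (auto simp: min_def)

lemma mdist4_ptype4_T4:
  "mdist4 m (m+1) (m+1) (m+2) = m+1" "ptype4 m (m+1) (m+1) (m+2) j \<longleftrightarrow> j = 4"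
  unfolding ptype4_def mdist4_def by (auto simp: min_def)

lemma mdist4_ptype4_E1:
  "mdist4 0 (Suc 0) (Suc 0) 0 = 0" "ptype4 0 (Suc 0) (Suc 0) 0 j \<longleftrightarrow> j = 1 \<or> j = 3"
  unfolding ptype4_def mdist4_def by auto

lemma mdist4_ptype4_E2:
  "mdist4 (Suc 0) 0 0 (Suc 0) = 0" "ptype4 (Suc 0) 0 0 (Suc 0) j \<longleftrightarrow> j = 2 \<or> j = 4"
  unfolding ptype4_def mdist4_def by auto

lemmas mdist4_ptype4_simps =
  mdist4_ptype4_T1[simplified] mdist4_ptype4_T2[simplified] mdist4_ptype4_T3[simplified]
  mdist4_ptype4_T4[simplified] mdist4_ptype4_E1 mdist4_ptype4_E2

section \<open>The three edges preceding an edge\<close>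

definition reverse_type :: "nat \<Rightarrow> nat" where
  "reverse_type j = (if j = 1 then 2 else if j = 2 then 1 else if j = 3 then 4 else 3)"

text \<open>For \<open>B = (b0, b1)\<close> at distance \<open>d\<close> and of type \<open>j\<close> from \<open>A\<close>, consider the two neighbours
\<open>x \<noteq> b1\<close> of \<open>b0\<close>; at least one of them is farther than \<open>b0\<close> from the endpoint of \<open>A\<close>
that is farther from \<open>b0\<close>. The pair (distance, type) of \<open>(A, (x, b0))\<close> is \<open>pred_edge2 d j\<close>
for such an \<open>x\<close> and \<open>pred_edge1 d j\<close> for the other one.\<close>

definition pred_edge1 :: "nat \<Rightarrow> nat \<Rightarrow> nat \<times> nat" where
  "pred_edge1 d j =
    (if d = 0 then (if j = 1 \<or> j = 3 then (1, 3) else (1, 2))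
     else if j = 1 then (d - 1, 1) else if j = 2 then (d + 1, 2)
     else if j = 3 then (d + 1, 3) else (d - 1, 4))"

definition pred_edge2 :: "nat \<Rightarrow> nat \<Rightarrow> nat \<times> nat" where
  "pred_edge2 d j =
    (if d = 0 then (if j = 1 \<or> j = 3 then (1, 3) else (1, 2))
     else if j = 1 then (d, 2) else if j = 2 then (d + 1, 2)
     else if j = 3 then (d + 1, 3) else (d, 3))"

lemma ptype4_reverse:
  assumes "admissible4 p q r s" "ptype4 p q r s j"
  shows "mdist4 q p s r = mdist4 p q r s \<and> ptype4 q p s r (reverse_type j)"
  using assms(2)
  by (cases rule: admissible4_cases[OF assms(1)]) (auto simp: mdist4_ptype4_simps reverse_type_def)

lemma ptype4_same_edge_iff:
  assumes "admissible4 p q r s" "ptype4 p q r s j"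
  shows "p = 0 \<and> s = 0 \<longleftrightarrow> mdist4 p q r s = 0 \<and> (j = 1 \<or> j = 3)"
  using assms(2) by (cases rule: admissible4_cases[OF assms(1)]) (auto simp: mdist4_ptype4_simps)

lemma ptype4_pred_edge1:
  assumes "admissible4 p q r s" "ptype4 p q r s j" "admissible4 g p h r"
    "if r > p then (if s < r then h = r + 1 else h + 1 = r)
     else (if q < p then g = p + 1 else g + 1 = p)"
  shows "mdist4 g p h r = fst (pred_edge1 (mdist4 p q r s) j) \<and>
    ptype4 g p h r (snd (pred_edge1 (mdist4 p q r s) j))"
  using assms(2,4)
  by (cases rule: admissible4_cases[OF assms(1)]; cases rule: admissible4_cases[OF assms(3)])
    (auto simp: mdist4_ptype4_simps pred_edge1_def)

lemma ptype4_pred_edge2: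
  assumes "admissible4 p q r s" "ptype4 p q r s j" "admissible4 g p h r"
    "if r > p then h = r + 1 else g = p + 1"
  shows "mdist4 g p h r = fst (pred_edge2 (mdist4 p q r s) j) \<and>
    ptype4 g p h r (snd (pred_edge2 (mdist4 p q r s) j))"
  using assms(2,4)
  by (cases rule: admissible4_cases[OF assms(1)]; cases rule: admissible4_cases[OF assms(3)])
    (auto simp: mdist4_ptype4_simps pred_edge2_def)

lemma nbrs_split_by_tdist:
  assumes "bvert a" "badj b0 b1" "a \<noteq> b0"
  obtains x1 x2 where "nbrs b0 = {b1, x1, x2}" "distinct [b1, x1, x2]"
    "tdist a x2 = tdist a b0 + 1"
    "if tdist a b1 < tdist a b0 then tdist a x1 = tdist a b0 + 1 else tdist a x1 + 1 = tdist a b0"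
proof -
  have "bvert b0" using assms badj_imp_bvert by auto
  then have three: "card (nbrs b0) = 3" by (rule card_nbrs)
  obtain t where t: "badj b0 t" "tdist a t + 1 = tdist a b0"
    using closer_nbr_exists[OF assms(1) \<open>bvert b0\<close> assms(3)] by blast
  have far: "tdist a y = tdist a b0 + 1" if "y \<in> nbrs b0" "y \<noteq> t" for y
    using that closer_nbr_unique[OF t(1), of y a] tdist_badj[of b0 y a] t
    unfolding nbrs_def by fastforce
  have b1: "b1 \<in> nbrs b0" and "t \<in> nbrs b0" using assms(2) t(1) unfolding nbrs_def by auto
  show thesis
  proof (cases "tdist a b1 < tdist a b0")
    case True
    then have "b1 = t" using far[OF b1] by force
    have "card (nbrs b0 - {b1}) = 2" using three b1 by simp
    then have "nbrs b0 - {b1} \<noteq> {}" by (metis card.empty zero_neq_numeral)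
    then obtain c where c: "c \<in> nbrs b0" "c \<noteq> b1" by blast
    obtain v where "nbrs b0 = {b1, c, v}" "distinct [b1, c, v]"
      using card_3_split[OF three b1 c(1)] c(2) by metis
    then show thesis using that far \<open>b1 = t\<close> True by auto
  next
    case False
    then have "b1 \<noteq> t" using t by auto
    obtain v where "nbrs b0 = {b1, t, v}" "distinct [b1, t, v]"
      using card_3_split[OF three b1 \<open>t \<in> nbrs b0\<close> \<open>b1 \<noteq> t\<close>] by blast
    then show thesis using that far t False by auto
  qed
qed

lemma pred_edges:
  assumes A: "badj a0 a1" and B: "badj b0 b1" and P: "ptype (a0, a1) (b0, b1) j"
  obtains x1 x2 where "nbrs b0 = {b1, x1, x2}" "distinct [b1, x1, x2]"
    "mdist (a0, a1) (x1, b0) = fst (pred_edge1 (mdist (a0, a1) (b0, b1)) j)"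
    "ptype (a0, a1) (x1, b0) (snd (pred_edge1 (mdist (a0, a1) (b0, b1)) j))"
    "mdist (a0, a1) (x2, b0) = fst (pred_edge2 (mdist (a0, a1) (b0, b1)) j)"
    "ptype (a0, a1) (x2, b0) (snd (pred_edge2 (mdist (a0, a1) (b0, b1)) j))"
proof -
  define p q r s where "p = tdist a0 b0" "q = tdist a0 b1" "r = tdist a1 b0" "s = tdist a1 b1"
  have adm: "admissible4 p q r s" using admissible4_tdist[OF A B] p_q_r_s_def by simp
  have pt: "ptype4 p q r s j" using P ptype_eq_ptype4[OF A B] p_q_r_s_def by simp
  have md: "mdist (a0, a1) (b0, b1) = mdist4 p q r s"
    using mdist_eq_mdist4[OF A B] p_q_r_s_def by simp
  define a where "a = (if r > p then a1 else a0)"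
  have "a \<noteq> b0" "bvert a"
    using adm A badj_imp_bvert unfolding a_def p_q_r_s_def admissible4_def differ_by_one_def
    by auto
  then obtain x1 x2 where X: "nbrs b0 = {b1, x1, x2}" "distinct [b1, x1, x2]"
    "tdist a x2 = tdist a b0 + 1"
    "if tdist a b1 < tdist a b0 then tdist a x1 = tdist a b0 + 1 else tdist a x1 + 1 = tdist a b0"
    using nbrs_split_by_tdist[OF _ B] by metis
  have adj: "badj x1 b0" "badj x2 b0" using X(1) badj_commute unfolding nbrs_def by auto
  have "if r > p then (if s < r then tdist a1 x1 = r + 1 else tdist a1 x1 + 1 = r)
     else (if q < p then tdist a0 x1 = p + 1 else tdist a0 x1 + 1 = p)"
    using X(4) unfolding a_def p_q_r_s_def by (auto split: if_splits)
  from ptype4_pred_edge1[OF adm pt _ this] have x1: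
    "mdist4 (tdist a0 x1) p (tdist a1 x1) r = fst (pred_edge1 (mdist4 p q r s) j) \<and>
     ptype4 (tdist a0 x1) p (tdist a1 x1) r (snd (pred_edge1 (mdist4 p q r s) j))"
    using admissible4_tdist[OF A adj(1)] p_q_r_s_def by simp
  have "if r > p then tdist a1 x2 = r + 1 else tdist a0 x2 = p + 1"
    using X(3) unfolding a_def p_q_r_s_def by (auto split: if_splits)
  from ptype4_pred_edge2[OF adm pt _ this] have x2:
    "mdist4 (tdist a0 x2) p (tdist a1 x2) r = fst (pred_edge2 (mdist4 p q r s) j) \<and>
     ptype4 (tdist a0 x2) p (tdist a1 x2) r (snd (pred_edge2 (mdist4 p q r s) j))"
    using admissible4_tdist[OF A adj(2)] p_q_r_s_def by simp
  show thesis
    using that[OF X(1,2)] x1 x2 md mdist_eq_mdist4[OF A adj(1)] mdist_eq_mdist4[OF A adj(2)]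
      ptype_eq_ptype4[OF A adj(1)] ptype_eq_ptype4[OF A adj(2)]
    unfolding p_q_r_s_def by simp
qed

lemma ptype_reverse_edge:
  assumes A: "badj a0 a1" and B: "badj b0 b1" and P: "ptype (a0, a1) (b0, b1) j"
  shows "mdist (a0, a1) (b1, b0) = mdist (a0, a1) (b0, b1) \<and>
    ptype (a0, a1) (b1, b0) (reverse_type j)"
proof -
  have B': "badj b1 b0" using B badj_commute by auto
  show ?thesis
    using ptype4_reverse[OF admissible4_tdist[OF A B]] P ptype_eq_ptype4[OF A B]
      mdist_eq_mdist4[OF A B] mdist_eq_mdist4[OF A B'] ptype_eq_ptype4[OF A B']
    by simp
qed

lemma same_edge_iff:
  assumes A: "badj a0 a1" and B: "badj b0 b1" and P: "ptype (a0, a1) (b0, b1) j"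
  shows "(b0, b1) = (a0, a1) \<longleftrightarrow> mdist (a0, a1) (b0, b1) = 0 \<and> (j = 1 \<or> j = 3)"
proof -
  have "(b0, b1) = (a0, a1) \<longleftrightarrow> tdist a0 b0 = 0 \<and> tdist a1 b1 = 0"
    using tdist_eq_0_iff[of a0 b0] tdist_eq_0_iff[of a1 b1] by auto
  then show ?thesis
    using ptype4_same_edge_iff[OF admissible4_tdist[OF A B]] P ptype_eq_ptype4[OF A B]
      mdist_eq_mdist4[OF A B]
    by simp
qed

section \<open>Counting paths by their last step\<close>

lemma is_path_snoc:
  assumes "length cs = Suc k"
  shows "is_path (Suc k) A B (cs @ [C]) \<longleftrightarrow>
    is_path k A (cs ! k) cs \<and> is_oedge C \<and> follows (cs ! k) C \<and> C = B"
  using assms unfolding is_path_def All_less_Suc by (auto simp: nth_append)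

lemma is_path_Suc_cases:
  assumes "is_path (Suc k) A C ds"
  obtains x cs where "ds = cs @ [C]" "x \<in> nbrs (fst C)" "is_path k A (x, fst C) cs"
proof -
  obtain cs D where ds: "ds = cs @ [D]"
    using assms unfolding is_path_def by (cases ds rule: rev_cases) auto
  then have len: "length cs = Suc k" using assms unfolding is_path_def by simp
  then have P: "is_path k A (cs ! k) cs" "follows (cs ! k) C" "D = C"
    using is_path_snoc assms ds by auto
  then have "is_oedge (cs ! k)" using len unfolding is_path_def by auto
  then have "fst (cs ! k) \<in> nbrs (fst C)"
    using P(2) badj_commute unfolding is_oedge_def follows_def nbrs_def by auto
  moreover have "cs ! k = (fst (cs ! k), fst C)"
    using P(2) unfolding follows_def by (simp add: prod_eq_iff)
  ultimately show thesis using that ds P by metis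
qed

lemma inversions_snoc:
  assumes "length cs = Suc k"
  shows "inversions (Suc k) (cs @ [C]) = inversions k cs + (if C = opp (cs ! k) then 1 else 0)"
proof -
  have "{i. i < Suc k \<and> (cs @ [C]) ! Suc i = opp ((cs @ [C]) ! i)} =
      {i. i < k \<and> cs ! Suc i = opp (cs ! i)} \<union> (if C = opp (cs ! k) then {k} else {})"
    using assms by (auto simp: nth_append less_Suc_eq)
  then show ?thesis unfolding inversions_def by (auto simp: card_insert_if)
qed

lemma finite_paths: "finite {cs. is_path k A C cs}"
proof (induction k arbitrary: C)
  case 0
  have "{cs. is_path 0 A C cs} \<subseteq> {[A]}"
    unfolding is_path_def by (auto simp: length_Suc_conv)
  then show ?case by (rule finite_subset) auto
next
  case (Suc k)
  have "{cs. is_path (Suc k) A C cs} \<subseteq>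
      (\<lambda>cs. cs @ [C]) ` (\<Union>x\<in>nbrs (fst C). {cs. is_path k A (x, fst C) cs})"
    by (auto elim!: is_path_Suc_cases)
  moreover have "finite \<dots>" using Suc.IH finite_nbrs by auto
  ultimately show ?case by (rule finite_subset)
qed

text \<open>The paths that end with \<open>C\<close> and have \<open>r - e\<close> inversions; \<open>e\<close> is the inversion, if any,
contributed by one further step.\<close>

definition inv_paths :: "nat \<Rightarrow> oedge \<Rightarrow> oedge \<Rightarrow> nat \<Rightarrow> nat \<Rightarrow> oedge list set" where
  "inv_paths k A C e r = {cs. is_path k A C cs \<and> inversions k cs + e = r}"

lemma paths_Suc_eq_UN:
  assumes B: "badj b0 b1"
  shows "{ds. is_path (Suc k) A (b0, b1) ds \<and> inversions (Suc k) ds = r} =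
    (\<Union>x\<in>nbrs b0. (\<lambda>cs. cs @ [(b0, b1)]) ` inv_paths k A (x, b0) (if x = b1 then 1 else 0) r)"
  (is "?L = ?R")
proof
  have last_step: "is_path k A (x, b0) cs \<Longrightarrow> length cs = Suc k \<and> cs ! k = (x, b0)" for x cs
    unfolding is_path_def by simp
  show "?L \<subseteq> ?R"
  proof
    fix ds assume "ds \<in> ?L"
    then have P: "is_path (Suc k) A (b0, b1) ds" and I: "inversions (Suc k) ds = r" by auto
    obtain x cs where cs: "ds = cs @ [(b0, b1)]" "x \<in> nbrs b0" "is_path k A (x, b0) cs"
      using is_path_Suc_cases[OF P, unfolded fst_conv] by blast
    have "inversions k cs + (if x = b1 then 1 else 0) = r"
      using I inversions_snoc[of cs k] last_step[OF cs(3)] cs(1) by (auto simp: opp_def)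
    then show "ds \<in> ?R" using cs unfolding inv_paths_def by blast
  qed
  show "?R \<subseteq> ?L"
  proof
    fix ds assume "ds \<in> ?R"
    then obtain x cs where x: "x \<in> nbrs b0" and ds: "ds = cs @ [(b0, b1)]"
      and P: "is_path k A (x, b0) cs" "inversions k cs + (if x = b1 then 1 else 0) = r"
      unfolding inv_paths_def by blast
    have "is_oedge (b0, b1)" using B unfolding is_oedge_def by simp
    then show "ds \<in> ?L"
      using is_path_snoc[of cs k] inversions_snoc[of cs k] last_step[OF P(1)] P ds
      by (auto simp: follows_def opp_def)
  qed
qed

lemma npaths_Suc:
  assumes B: "badj b0 b1" and X: "nbrs b0 = {b1, x1, x2}" "distinct [b1, x1, x2]"
  shows "npaths (Suc k) r A (b0, b1) =
    card (inv_paths k A (b1, b0) 1 r) + npaths k r A (x1, b0) + npaths k r A (x2, b0)"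
proof -
  let ?snoc = "\<lambda>cs. cs @ [(b0, b1)]"
  let ?S = "\<lambda>x. ?snoc ` inv_paths k A (x, b0) (if x = b1 then 1 else 0) r"
  have inj: "inj_on ?snoc X" for X by (rule inj_onI) simp
  have disj: "?S x \<inter> ?S y = {}" if "x \<noteq> y" for x y
    using that unfolding inv_paths_def is_path_def by auto
  have "npaths (Suc k) r A (b0, b1) = card (\<Union>x\<in>nbrs b0. ?S x)"
    unfolding npaths_def paths_Suc_eq_UN[OF B] ..
  also have "\<dots> = (\<Sum>x\<in>nbrs b0. card (?S x))"
    using finite_nbrs finite_paths disj
    by (intro card_UN_disjoint) (auto simp: inv_paths_def)
  also have "\<dots> = (\<Sum>x\<in>nbrs b0. card (inv_paths k A (x, b0) (if x = b1 then 1 else 0) r))"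
    by (simp add: card_image[OF inj])
  also have "\<dots> = card (inv_paths k A (b1, b0) 1 r) +
      card (inv_paths k A (x1, b0) 0 r) + card (inv_paths k A (x2, b0) 0 r)"
  proof -
    have "b1 \<noteq> x1" "b1 \<noteq> x2" "x1 \<noteq> x2" using X(2) by auto
    then show ?thesis unfolding X(1) by (simp add: add.assoc)
  qed
  also have "\<dots> = card (inv_paths k A (b1, b0) 1 r) + npaths k r A (x1, b0) + npaths k r A (x2, b0)"
    unfolding npaths_def inv_paths_def by simp
  finally show ?thesis .
qed

lemma card_inv_paths_1: "card (inv_paths k A C 1 r) = (if r = 0 then 0 else npaths k (r - 1) A C)"
  unfolding inv_paths_def npaths_def by (cases r) auto

lemma npaths_0: "npaths 0 r A B = (if A = B \<and> r = 0 \<and> is_oedge A then 1 else 0)"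
proof -
  have "{cs. is_path 0 A B cs \<and> inversions 0 cs = r} =
      (if A = B \<and> r = 0 \<and> is_oedge A then {[A]} else {})"
    unfolding is_path_def inversions_def by (auto simp: length_Suc_conv)
  then show ?thesis unfolding npaths_def by simp
qed

section \<open>The recursion for \<open>Gamma\<close>\<close>

fun gamma_rec :: "nat \<Rightarrow> int \<Rightarrow> nat \<Rightarrow> nat \<Rightarrow> nat" where
  "gamma_rec 0 r d j = (if r = 0 \<and> d = 0 \<and> (j = 1 \<or> j = 3) then 1 else 0)"
| "gamma_rec (Suc k) r d j = gamma_rec k (r - 1) d (reverse_type j)
     + gamma_rec k r (fst (pred_edge1 d j)) (snd (pred_edge1 d j))
     + gamma_rec k r (fst (pred_edge2 d j)) (snd (pred_edge2 d j))"

lemma gamma_rec_eq_0: "r < 0 \<or> r > int k \<or> d > k \<Longrightarrow> gamma_rec k r d j = 0"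
proof (induction k arbitrary: r d j)
  case (Suc k)
  have "d > Suc k \<Longrightarrow> fst (pred_edge1 d j) > k \<and> fst (pred_edge2 d j) > k"
    unfolding pred_edge1_def pred_edge2_def by auto
  then show ?case using Suc by (auto simp del: gamma_rec.simps(1))
qed auto

lemma npaths_eq_gamma_rec:
  "is_oedge A \<Longrightarrow> is_oedge B \<Longrightarrow> ptype A B j \<Longrightarrow>
    npaths k r A B = gamma_rec k (int r) (mdist A B) j"
proof (induction k arbitrary: B j r)
  case 0
  obtain a0 a1 b0 b1 where ab: "A = (a0, a1)" "B = (b0, b1)" by (cases A, cases B) auto
  have adj: "badj a0 a1" "badj b0 b1" using 0 ab unfolding is_oedge_def by auto
  show ?case using same_edge_iff[OF adj] 0(1,3) ab npaths_0 by auto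
next
  case (Suc k)
  obtain a0 a1 b0 b1 where ab: "A = (a0, a1)" "B = (b0, b1)" by (cases A, cases B) auto
  have A: "badj a0 a1" and B: "badj b0 b1" using Suc.prems ab unfolding is_oedge_def by auto
  have P: "ptype (a0, a1) (b0, b1) j" using Suc.prems ab by simp
  define d where "d = mdist (a0, a1) (b0, b1)"
  obtain x1 x2 where X: "nbrs b0 = {b1, x1, x2}" "distinct [b1, x1, x2]"
    "mdist (a0, a1) (x1, b0) = fst (pred_edge1 d j)"
    "ptype (a0, a1) (x1, b0) (snd (pred_edge1 d j))"
    "mdist (a0, a1) (x2, b0) = fst (pred_edge2 d j)"
    "ptype (a0, a1) (x2, b0) (snd (pred_edge2 d j))"
    using pred_edges[OF A B P] d_def by metis
  have rev: "mdist (a0, a1) (b1, b0) = d" "ptype (a0, a1) (b1, b0) (reverse_type j)"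
    using ptype_reverse_edge[OF A B P] d_def by auto
  have edges: "is_oedge (x1, b0)" "is_oedge (x2, b0)" "is_oedge (b1, b0)"
    using X(1) B badj_commute unfolding is_oedge_def nbrs_def by auto
  have "card (inv_paths k A (b1, b0) 1 r) = gamma_rec k (int r - 1) d (reverse_type j)"
  proof (cases "r = 0")
    case True
    then show ?thesis using card_inv_paths_1 gamma_rec_eq_0 by simp
  next
    case False
    then have "int (r - 1) = int r - 1" by simp
    then show ?thesis
      using card_inv_paths_1 False Suc.IH[OF Suc.prems(1) edges(3)] rev ab by simp
  qed
  moreover have
    "npaths k r A (x1, b0) = gamma_rec k (int r) (fst (pred_edge1 d j)) (snd (pred_edge1 d j))"
    using Suc.IH[OF Suc.prems(1) edges(1)] X(3,4) ab by simp
  moreover have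
    "npaths k r A (x2, b0) = gamma_rec k (int r) (fst (pred_edge2 d j)) (snd (pred_edge2 d j))"
    using Suc.IH[OF Suc.prems(1) edges(2)] X(5,6) ab by simp
  ultimately show ?case using npaths_Suc[OF B X(1,2)] ab d_def by simp
qed

definition ray :: "nat \<Rightarrow> nat list" where
  "ray i = map (\<lambda>t. t mod 2) [0..<i]"

lemma bvert_ray: "bvert (ray i)"
  unfolding bvert_def ray_def by (auto; presburger)

lemma ray_Suc: "ray (Suc i) = ray i @ [i mod 2]"
  by (simp add: ray_def)

lemma badj_ray_Suc: "badj (ray i) (ray (Suc i))"
  using bvert_ray[of i] bvert_ray[of "Suc i"] ray_Suc[of i] unfolding badj_def by blast

lemma ray_append: "i \<le> j \<Longrightarrow> ray j = ray i @ map (\<lambda>t. t mod 2) [i..<j]"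
  unfolding ray_def by (metis map_append upt_add_eq_append zero_le le_add_diff_inverse)

lemma tdist_ray: "tdist (ray i) (ray j) = (if i \<le> j then j - i else i - j)"
proof -
  have "tdist (ray i) (ray j) = j - i" if "i \<le> j" for i j
    using ray_append[OF that] lcp_append_self[of "ray i"] unfolding tdist_def
    by (simp add: ray_def)
  then show ?thesis using tdist_commute[of "ray i" "ray j"] by (cases "i \<le> j") auto
qed

lemma ex_pair_of_type:
  assumes "j \<in> {1,2,3,4}"
  obtains A B where "is_oedge A" "is_oedge B" "mdist A B = d" "ptype A B j"
proof -
  have a: "badj (ray 0) (ray 1)" "badj (ray 1) (ray 0)"
    using badj_ray_Suc[of 0] badj_commute by auto
  have b: "badj (ray d) (ray (Suc d))" "badj (ray (Suc d)) (ray d)"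
    using badj_ray_Suc[of d] badj_commute by auto
  have edges: "is_oedge (ray 0, ray 1)" "is_oedge (ray 1, ray 0)"
    "is_oedge (ray d, ray (Suc d))" "is_oedge (ray (Suc d), ray d)"
    using a b unfolding is_oedge_def by auto
  note facts = mdist_eq_mdist4 ptype_eq_ptype4
  show thesis
  proof (cases d)
    case 0
    then show thesis
      using assms that[OF edges(1,1)] that[OF edges(1,2)] facts[OF a(1) a(1)] facts[OF a(1) a(2)]
      by (auto simp: tdist_ray mdist4_ptype4_simps)
  next
    case (Suc m)
    then have "tdist (ray 0) (ray d) = m + 1" "tdist (ray 0) (ray (Suc d)) = m + 2"
      "tdist (ray 1) (ray d) = m" "tdist (ray 1) (ray (Suc d)) = m + 1"
      by (simp_all add: tdist_ray)
    then show thesis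
      using assms Suc
        that[OF edges(1,3)] that[OF edges(1,4)] that[OF edges(2,4)] that[OF edges(2,3)]
        facts[OF a(1) b(1)] facts[OF a(1) b(2)] facts[OF a(2) b(2)] facts[OF a(2) b(1)]
      by (auto simp: mdist4_ptype4_simps)
  qed
qed

lemma Gamma_eq_gamma_rec:
  assumes "j \<in> {1,2,3,4}"
  shows "Gamma k r d j = gamma_rec k r d j"
proof (cases "r < 0 \<or> r > int k \<or> d > k")
  case True
  then show ?thesis unfolding Gamma_def using gamma_rec_eq_0 by simp
next
  case False
  let ?P = "\<lambda>n. \<exists>A B. is_oedge A \<and> is_oedge B \<and> mdist A B = d \<and> ptype A B j \<and>
    n = npaths k (nat r) A B"
  have unique: "n = gamma_rec k r d j" if n: "?P n" for n
  proof -
    obtain A B where "is_oedge A" "is_oedge B" "mdist A B = d" "ptype A B j"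
      "n = npaths k (nat r) A B"
      using n by blast
    then show ?thesis using npaths_eq_gamma_rec[of A B j k "nat r"] False by simp
  qed
  obtain A B where "is_oedge A" "is_oedge B" "mdist A B = d" "ptype A B j"
    using ex_pair_of_type[OF assms] .
  then have "\<exists>n. ?P n" by blast
  from someI_ex[OF this] have "(SOME n. ?P n) = gamma_rec k r d j" by (rule unique)
  then show ?thesis unfolding Gamma_def using False by simp
qed

theorem lemma2:
  fixes k d :: nat and r :: int
  assumes "k \<ge> 2"
  shows "(d \<ge> 1 \<longrightarrow>
      Gamma k r d 1 = Gamma (k-1) (r-1) d 2 + Gamma (k-1) r (d-1) 1 + Gamma (k-1) r d 2 \<and>
      Gamma k r d 2 = Gamma (k-1) (r-1) d 1 + 2 * Gamma (k-1) r (d+1) 2 \<and>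
      Gamma k r d 3 = Gamma (k-1) (r-1) d 4 + 2 * Gamma (k-1) r (d+1) 3 \<and>
      Gamma k r d 4 = Gamma (k-1) (r-1) d 3 + Gamma (k-1) r (d-1) 4 + Gamma (k-1) r d 3)
    \<and> Gamma k r 0 1 = Gamma (k-1) (r-1) 0 2 + 2 * Gamma (k-1) r 1 3
    \<and> Gamma k r 0 2 = Gamma (k-1) (r-1) 0 1 + 2 * Gamma (k-1) r 1 2
    \<and> Gamma k r 0 3 = Gamma (k-1) (r-1) 0 4 + 2 * Gamma (k-1) r 1 3
    \<and> Gamma k r 0 4 = Gamma (k-1) (r-1) 0 3 + 2 * Gamma (k-1) r 1 2"
proof -
  obtain k' where k: "k = Suc k'" using assms by (cases k) auto
  have Gamma: "Gamma n s e 1 = gamma_rec n s e 1" "Gamma n s e 2 = gamma_rec n s e 2"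
    "Gamma n s e 3 = gamma_rec n s e 3" "Gamma n s e 4 = gamma_rec n s e 4" for n s e
    by (simp_all add: Gamma_eq_gamma_rec)
  show ?thesis unfolding Gamma k by (simp add: reverse_type_def pred_edge1_def pred_edge2_def)
qed

end
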